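(* For every integer $t\geq 2$ there exist a connected graph $G$ and a function $g:A\to B$ such that $fix(G)=t=fix(F_G)$.
   Context: A set $S\subseteq V(H)$ is a fixing set of a graph $H$ if the only automorphism of $H$ fixing every vertex of $S$ is the identity; $fix(H)$ is the minimum cardinality of a fixing set of $H$. Functigraph: let $G_1,G_2$ be disjoint copies of a connected graph $G$, with $A=V(G_1)$, $B=V(G_2)$, and let $g:A\to B$ be a function. The functigraph $F_G$ has vertex set $A\cup B$ and edge set $E(G_1)\cup E(G_2)\cup\{ug(u):u\in A\}$. *)

theory Defs
  imports Main
begin

definition simple_graph :: "'a set \<Rightarrow> 'a set set \<Rightarrow> bool" where
  "simple_graph V E \<longleftrightarrow> finite V \<and> (\<forall>e\<in>E. \<exists>u v. e = {u, v} \<and> u \<noteq> v \<and> u \<in> V \<and> v \<in> V)"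

definition adj :: "'a set set \<Rightarrow> 'a \<Rightarrow> 'a \<Rightarrow> bool" where
  "adj E u v \<longleftrightarrow> {u, v} \<in> E"

definition connected_graph :: "'a set \<Rightarrow> 'a set set \<Rightarrow> bool" where
  "connected_graph V E \<longleftrightarrow> V \<noteq> {} \<and>
     (\<forall>u\<in>V. \<forall>v\<in>V. (\<lambda>x y. adj E x y \<and> x \<in> V \<and> y \<in> V)\<^sup>*\<^sup>* u v)"

definition automorphism :: "'a set \<Rightarrow> 'a set set \<Rightarrow> ('a \<Rightarrow> 'a) \<Rightarrow> bool" where
  "automorphism V E f \<longleftrightarrow> bij_betw f V V \<and>
     (\<forall>u\<in>V. \<forall>v\<in>V. adj E u v \<longleftrightarrow> adj E (f u) (f v))"

definition fixing_set :: "'a set \<Rightarrow> 'a set set \<Rightarrow> 'a set \<Rightarrow> bool" where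
  "fixing_set V E S \<longleftrightarrow> S \<subseteq> V \<and>
     (\<forall>f. automorphism V E f \<and> (\<forall>x\<in>S. f x = x) \<longrightarrow> (\<forall>x\<in>V. f x = x))"

definition fix_num :: "'a set \<Rightarrow> 'a set set \<Rightarrow> nat" where
  "fix_num V E = (LEAST k. \<exists>S. fixing_set V E S \<and> card S = k)"

text \<open>Functigraph: copies G1 = Inl ` V (A) and G2 = Inr ` V (B), plus edges u g(u).\<close>
definition functi_V :: "'a set \<Rightarrow> ('a + 'a) set" where
  "functi_V V = Inl ` V \<union> Inr ` V"

definition functi_E :: "'a set \<Rightarrow> 'a set set \<Rightarrow> ('a \<Rightarrow> 'a) \<Rightarrow> ('a + 'a) set set" where
  "functi_E V E g = (image Inl ` E) \<union> (image Inr ` E) \<union> {{Inl u, Inr (g u)} | u. u \<in> V}"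

end

theory Submission
  imports Defs "HOL-Combinatorics.Transposition"
begin

text \<open>Take \<open>G = K\<^sub>t\<^sub>+\<^sub>1\<close> and \<open>g = id\<close>, so that \<open>F\<^sub>G\<close> is the prism \<open>K\<^sub>t\<^sub>+\<^sub>1 \<times> K\<^sub>2\<close>.
  A transposition of two vertices of \<open>K\<^sub>t\<^sub>+\<^sub>1\<close> (applied to both copies in the prism) is an
  automorphism moving only vertices lying over those two, so every fixing set lies over all but
  at most one vertex of \<open>K\<^sub>t\<^sub>+\<^sub>1\<close> and has at least \<open>t\<close> elements. Conversely, any \<open>t\<close>
  vertices fix \<open>K\<^sub>t\<^sub>+\<^sub>1\<close>; in the prism, fixing \<open>t\<close> vertices of the first copy fixes the last
  one too, since it is the only remaining vertex adjacent to two of them (this needs \<open>t \<ge> 2\<close>),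
  and then each vertex of the second copy is the only such vertex adjacent to its partner.\<close>

lemma fix_num_eqI:
  assumes "fixing_set V E S" "card S = t"
    and "\<And>S. fixing_set V E S \<Longrightarrow> t \<le> card S"
  shows "fix_num V E = t"
  unfolding fix_num_def using assms by (intro Least_equality) auto

lemma fixing_setD:
  assumes "fixing_set V E S" "automorphism V E f" "\<forall>x\<in>S. f x = x" "x \<in> V"
  shows "f x = x"
  using assms unfolding fixing_set_def by blast

lemma automorphism_fixes_unique_common_neighbour:
  assumes f: "automorphism V E f" and "T \<subseteq> V" "\<forall>x\<in>T. f x = x"
    and "v \<in> V" "N \<subseteq> T" "\<forall>n\<in>N. adj E v n"
    and unique: "\<forall>x\<in>V - T. (\<forall>n\<in>N. adj E x n) \<longrightarrow> x = v"
  shows "f v = v"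
proof (cases "f v \<in> T")
  case True
  then have "f (f v) = f v" using assms by blast
  moreover have "inj_on f V" "f v \<in> V"
    using f \<open>v \<in> V\<close> unfolding automorphism_def by (auto dest: bij_betw_imp_inj_on bij_betwE)
  ultimately show ?thesis using \<open>v \<in> V\<close> by (auto dest: inj_onD)
next
  case False
  have "f v \<in> V" using f \<open>v \<in> V\<close> unfolding automorphism_def by (auto dest: bij_betwE)
  moreover have "\<forall>n\<in>N. adj E (f v) n"
    using assms unfolding automorphism_def by (metis subsetD)
  ultimately show ?thesis using unique False by blast
qed

text \<open>A fixing set must meet all fibres of \<open>p\<close> over \<open>W\<close> but one.\<close>

lemma fixing_set_card_lower_bound:
  assumes S: "fixing_set V E S" and "finite V" "finite W"
    and swap: "\<And>i j. i \<in> W \<Longrightarrow> j \<in> W \<Longrightarrow> i \<noteq> j \<Longrightarrow>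
      \<exists>\<sigma>. automorphism V E \<sigma> \<and> (\<forall>x\<in>V. p x \<noteq> i \<longrightarrow> p x \<noteq> j \<longrightarrow> \<sigma> x = x) \<and> (\<exists>x\<in>V. \<sigma> x \<noteq> x)"
  shows "card W \<le> Suc (card S)"
proof (rule ccontr)
  assume "\<not> ?thesis"
  have "finite S" using S \<open>finite V\<close> unfolding fixing_set_def by (auto intro: finite_subset)
  then have "card W - card S \<le> card (W - p ` S)"
    using diff_card_le_card_Diff[of "p ` S" W] card_image_le[of S p] by simp
  with \<open>\<not> ?thesis\<close> have "Suc (Suc 0) \<le> card (W - p ` S)" by linarith
  then obtain i j where "i \<in> W - p ` S" "j \<in> W - p ` S" "i \<noteq> j"
    by (auto simp: card_le_Suc_iff)
  then obtain \<sigma> where \<sigma>: "automorphism V E \<sigma>" "\<forall>x\<in>V. p x \<noteq> i \<longrightarrow> p x \<noteq> j \<longrightarrow> \<sigma> x = x"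
    "\<exists>x\<in>V. \<sigma> x \<noteq> x"
    using swap by blast
  have "\<forall>x\<in>S. \<sigma> x = x"
    using \<sigma>(2) S \<open>i \<in> W - p ` S\<close> \<open>j \<in> W - p ` S\<close> unfolding fixing_set_def by force
  then show False using \<sigma> fixing_setD[OF S] by blast
qed

definition complete_edges :: "'a set \<Rightarrow> 'a set set" where
  "complete_edges V = {{u, v} | u v. u \<in> V \<and> v \<in> V \<and> u \<noteq> v}"

lemma adj_complete_edges:
  "u \<in> V \<Longrightarrow> v \<in> V \<Longrightarrow> adj (complete_edges V) u v \<longleftrightarrow> u \<noteq> v"
  unfolding adj_def complete_edges_def by (auto simp: doubleton_eq_iff)

lemma simple_graph_complete: "finite V \<Longrightarrow> simple_graph V (complete_edges V)"
  unfolding simple_graph_def complete_edges_def by auto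

lemma connected_graph_complete: "V \<noteq> {} \<Longrightarrow> connected_graph V (complete_edges V)"
  unfolding connected_graph_def
proof (intro conjI ballI)
  fix u v assume "u \<in> V" "v \<in> V"
  then show "(\<lambda>x y. adj (complete_edges V) x y \<and> x \<in> V \<and> y \<in> V)\<^sup>*\<^sup>* u v"
    by (cases "u = v") (auto simp: adj_complete_edges intro: r_into_rtranclp)
qed

lemma automorphism_complete_transpose:
  "i \<in> V \<Longrightarrow> j \<in> V \<Longrightarrow> automorphism V (complete_edges V) (transpose i j)"
  unfolding automorphism_def
proof (intro conjI ballI)
  assume "i \<in> V" "j \<in> V"
  then show "bij_betw (transpose i j) V V"
    by (simp add: bij_betw_def transpose_image_eq)
  fix u v assume "u \<in> V" "v \<in> V"
  moreover have "transpose i j u \<in> V" "transpose i j v \<in> V"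
    using \<open>i \<in> V\<close> \<open>j \<in> V\<close> \<open>u \<in> V\<close> \<open>v \<in> V\<close> by (auto simp: transpose_def)
  moreover have "transpose i j u = transpose i j v \<longleftrightarrow> u = v"
    by (metis transpose_involutory)
  ultimately show "adj (complete_edges V) u v \<longleftrightarrow> adj (complete_edges V) (transpose i j u) (transpose i j v)"
    by (simp only: adj_complete_edges)
qed

lemma fix_num_complete:
  assumes "finite V" "card V = Suc t"
  shows "fix_num V (complete_edges V) = t"
proof -
  obtain v where "v \<in> V" using assms card_gt_0_iff by fastforce
  have "fixing_set V (complete_edges V) (V - {v})"
    unfolding fixing_set_def
  proof (intro conjI allI impI ballI)
    fix f x assume f: "automorphism V (complete_edges V) f \<and> (\<forall>x\<in>V - {v}. f x = x)"
      and "x \<in> V"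
    have "f v = v"
      using f \<open>v \<in> V\<close> by (intro automorphism_fixes_unique_common_neighbour[where T = "V - {v}" and N = "{}"]) auto
    then show "f x = x" using f \<open>x \<in> V\<close> by (cases "x = v") auto
  qed auto
  moreover have "card (V - {v}) = t" using assms \<open>v \<in> V\<close> by simp
  moreover have "t \<le> card S" if "fixing_set V (complete_edges V) S" for S
  proof -
    have "card V \<le> Suc (card S)"
    proof (rule fixing_set_card_lower_bound[OF that \<open>finite V\<close> \<open>finite V\<close>, where p = id])
      fix i j assume "i \<in> V" "j \<in> V" "i \<noteq> j"
      then show "\<exists>\<sigma>. automorphism V (complete_edges V) \<sigma> \<and>
          (\<forall>x\<in>V. id x \<noteq> i \<longrightarrow> id x \<noteq> j \<longrightarrow> \<sigma> x = x) \<and> (\<exists>x\<in>V. \<sigma> x \<noteq> x)"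
        by (intro exI[of _ "transpose i j"] conjI automorphism_complete_transpose bexI[of _ i]) auto
    qed
    then show ?thesis using assms by simp
  qed
  ultimately show ?thesis by (rule fix_num_eqI)
qed

lemma image_Inl_mem_image_image_Inl [simp]:
  "Inl ` A \<in> image Inl ` F \<longleftrightarrow> A \<in> F"
  by (auto simp: inj_image_eq_iff)

lemma image_Inr_mem_image_image_Inr [simp]:
  "Inr ` A \<in> image Inr ` F \<longleftrightarrow> A \<in> F"
  by (auto simp: inj_image_eq_iff)

lemma adj_functi_E_Inl_Inl [simp]: "adj (functi_E V E g) (Inl u) (Inl v) \<longleftrightarrow> adj E u v"
proof -
  have "{Inl u, Inl v} \<in> image Inl ` E \<longleftrightarrow> {u, v} \<in> E"
    using image_Inl_mem_image_image_Inl[of "{u, v}" E] by (simp only: image_insert image_empty)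
  moreover have "{Inl u, Inl v} \<notin> image Inr ` E \<union> {{Inl w, Inr (g w)} | w. w \<in> V}" by blast
  ultimately show ?thesis unfolding adj_def functi_E_def by blast
qed

lemma adj_functi_E_Inr_Inr [simp]: "adj (functi_E V E g) (Inr u) (Inr v) \<longleftrightarrow> adj E u v"
proof -
  have "{Inr u, Inr v} \<in> image Inr ` E \<longleftrightarrow> {u, v} \<in> E"
    using image_Inr_mem_image_image_Inr[of "{u, v}" E] by (simp only: image_insert image_empty)
  moreover have "{Inr u, Inr v} \<notin> image Inl ` E \<union> {{Inl w, Inr (g w)} | w. w \<in> V}" by blast
  ultimately show ?thesis unfolding adj_def functi_E_def by blast
qed

lemma adj_functi_E_Inl_Inr [simp]: "adj (functi_E V E g) (Inl u) (Inr v) \<longleftrightarrow> u \<in> V \<and> v = g u"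
proof -
  have "{Inl u, Inr v} \<notin> image Inl ` E \<union> image Inr ` E" by blast
  moreover have "{Inl u, Inr v} \<in> {{Inl w, Inr (g w)} | w. w \<in> V} \<longleftrightarrow> u \<in> V \<and> v = g u"
    by (auto simp: doubleton_eq_iff)
  ultimately show ?thesis unfolding adj_def functi_E_def by blast
qed

lemma adj_functi_E_Inr_Inl [simp]: "adj (functi_E V E g) (Inr v) (Inl u) \<longleftrightarrow> u \<in> V \<and> v = g u"
  by (metis adj_def adj_functi_E_Inl_Inr insert_commute)

lemma mem_functi_V_iff [simp]:
  "Inl x \<in> functi_V V \<longleftrightarrow> x \<in> V" "Inr x \<in> functi_V V \<longleftrightarrow> x \<in> V"
  unfolding functi_V_def by auto

lemma automorphism_functi_map_sum:
  assumes h: "automorphism V E h" and commute: "\<forall>x\<in>V. h (g x) = g (h x)" and "g ` V \<subseteq> V"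
  shows "automorphism (functi_V V) (functi_E V E g) (map_sum h h)"
proof -
  have bij: "bij_betw h V V" and adj: "\<forall>u\<in>V. \<forall>v\<in>V. adj E u v \<longleftrightarrow> adj E (h u) (h v)"
    using h unfolding automorphism_def by auto
  then have inj: "inj_on h V" and "h ` V = V" by (auto simp: bij_betw_def)
  have "bij_betw (map_sum h h) (functi_V V) (functi_V V)"
    unfolding bij_betw_def
  proof
    show "inj_on (map_sum h h) (functi_V V)"
    proof (rule inj_onI)
      fix x y assume "x \<in> functi_V V" "y \<in> functi_V V" "map_sum h h x = map_sum h h y"
      then show "x = y" using inj by (cases x; cases y) (auto dest: inj_onD)
    qed
    show "map_sum h h ` functi_V V = functi_V V"
      unfolding functi_V_def image_Un image_comp map_sum_o_inj
      by (simp only: image_comp[symmetric] \<open>h ` V = V\<close>)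
  qed
  moreover have "adj (functi_E V E g) u v \<longleftrightarrow> adj (functi_E V E g) (map_sum h h u) (map_sum h h v)"
    if "u \<in> functi_V V" "v \<in> functi_V V" for u v
  proof -
    have eq_g: "h y = g (h x) \<longleftrightarrow> y = g x" if "x \<in> V" "y \<in> V" for x y
    proof -
      have "h y = g (h x) \<longleftrightarrow> h y = h (g x)" using commute that by simp
      also have "\<dots> \<longleftrightarrow> y = g x" using inj that \<open>g ` V \<subseteq> V\<close> by (auto dest: inj_onD)
      finally show ?thesis .
    qed
    show ?thesis
      using that adj eq_g bij_betwE[OF bij] by (cases u; cases v) auto
  qed
  ultimately show ?thesis unfolding automorphism_def by blast
qed

lemma fix_num_functi_complete_id:
  assumes "finite V" "card V = Suc t" "2 \<le> t"
  shows "fix_num (functi_V V) (functi_E V (complete_edges V) id) = t"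
proof -
  let ?V = "functi_V V" and ?E = "functi_E V (complete_edges V) id"
  obtain v where "v \<in> V" using assms card_gt_0_iff by fastforce
  then have "Suc (Suc 0) \<le> card (V - {v})" using assms by simp
  then obtain a b where ab: "a \<in> V - {v}" "b \<in> V - {v}" "a \<noteq> b"
    by (auto simp: card_le_Suc_iff)
  have "fixing_set ?V ?E (Inl ` (V - {v}))"
    unfolding fixing_set_def
  proof (intro conjI allI impI ballI)
    fix f x assume f: "automorphism ?V ?E f \<and> (\<forall>x\<in>Inl ` (V - {v}). f x = x)" and "x \<in> ?V"
    have "f (Inl v) = Inl v"
    proof (rule automorphism_fixes_unique_common_neighbour[where T = "Inl ` (V - {v})" and N = "{Inl a, Inl b}"])
      show "\<forall>y\<in>?V - Inl ` (V - {v}). (\<forall>n\<in>{Inl a, Inl b}. adj ?E y n) \<longrightarrow> y = Inl v"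
        using ab unfolding functi_V_def by (auto simp: adj_complete_edges)
    qed (use f ab \<open>v \<in> V\<close> in \<open>auto simp: adj_complete_edges functi_V_def\<close>)
    with f have fixed_Inl: "\<forall>y\<in>Inl ` V. f y = y" by blast
    have "f (Inr w) = Inr w" if "w \<in> V" for w
    proof (rule automorphism_fixes_unique_common_neighbour[where T = "Inl ` V" and N = "{Inl w}"])
      show "\<forall>y\<in>?V - Inl ` V. (\<forall>n\<in>{Inl w}. adj ?E y n) \<longrightarrow> y = Inr w"
        unfolding functi_V_def by auto
    qed (use f fixed_Inl that in \<open>auto simp: functi_V_def\<close>)
    with fixed_Inl \<open>x \<in> ?V\<close> show "f x = x" unfolding functi_V_def by blast
  qed (auto simp: functi_V_def)
  moreover have "card (Inl ` (V - {v})) = t"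
    using assms \<open>v \<in> V\<close> by (simp add: card_image)
  moreover have "t \<le> card S" if "fixing_set ?V ?E S" for S
  proof -
    have "card V \<le> Suc (card S)"
    proof (rule fixing_set_card_lower_bound[OF that _ \<open>finite V\<close>, where p = "case_sum id id"])
      show "finite ?V" using \<open>finite V\<close> by (simp add: functi_V_def)
      fix i j assume "i \<in> V" "j \<in> V" "i \<noteq> j"
      then have "automorphism ?V ?E (map_sum (transpose i j) (transpose i j))"
        by (simp add: automorphism_functi_map_sum automorphism_complete_transpose)
      moreover have "\<forall>x\<in>?V. case_sum id id x \<noteq> i \<longrightarrow> case_sum id id x \<noteq> j \<longrightarrow>
          map_sum (transpose i j) (transpose i j) x = x"
        by (auto split: sum.split)
      moreover have "map_sum (transpose i j) (transpose i j) (Inl i) \<noteq> Inl i" "Inl i \<in> ?V"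
        using \<open>i \<in> V\<close> \<open>i \<noteq> j\<close> by auto
      ultimately show "\<exists>\<sigma>. automorphism ?V ?E \<sigma> \<and>
          (\<forall>x\<in>?V. case_sum id id x \<noteq> i \<longrightarrow> case_sum id id x \<noteq> j \<longrightarrow> \<sigma> x = x) \<and> (\<exists>x\<in>?V. \<sigma> x \<noteq> x)"
        by blast
    qed
    then show ?thesis using assms by simp
  qed
  ultimately show ?thesis by (rule fix_num_eqI)
qed

theorem lemma2p6:
  fixes t :: nat
  assumes "t \<ge> 2"
  shows "\<exists>(V :: nat set) E g. simple_graph V E \<and> connected_graph V E \<and> g ` V \<subseteq> V \<and>
           fix_num V E = t \<and> fix_num (functi_V V) (functi_E V E g) = t"
proof (intro exI conjI)
  show "simple_graph {0..t} (complete_edges {0..t})" by (simp add: simple_graph_complete)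
  show "connected_graph {0..t} (complete_edges {0..t})" by (simp add: connected_graph_complete)
  show "id ` {0..t} \<subseteq> {0..t}" by simp
  show "fix_num {0..t} (complete_edges {0..t}) = t" by (simp add: fix_num_complete)
  show "fix_num (functi_V {0..t}) (functi_E {0..t} (complete_edges {0..t}) id) = t"
    using assms by (simp add: fix_num_functi_complete_id)
qed

end
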